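(* For all integers $n,m$, the multiplication map $\mathcal{L}_n\otimes\mathcal{L}_m\to\mathcal{L}_{n+m}$, $x\otimes y\mapsto xy$, induces an isomorphism of $\mathcal{A}(\mathbb{CP}^1_q)$-bimodules $\mathcal{L}_n\otimes_{\mathcal{A}(\mathbb{CP}^1_q)}\mathcal{L}_m\simeq\mathcal{L}_{n+m}$.
   Context: Fix $0<q<1$. Let $\mathcal{A}(SU_q(2))$ be the unital complex $*$-algebra generated by $a,c$ subject to $ac=qca$, $ac^*=qc^*a$, $cc^*=c^*c$, $a^*a+c^*c=aa^*+q^2cc^*=1$. Let $U_q(su(2))$ be the Hopf $*$-algebra generated by $K,K^{-1},E,F$ with $KK^{-1}=K^{-1}K=1$, $KE=qEK$, $KF=q^{-1}FK$, $EF-FE=(K^2-K^{-2})/(q-q^{-1})$, coproduct $\Delta K=K\otimes K$, $\Delta E=E\otimes K+K^{-1}\otimes E$, $\Delta F=F\otimes K+K^{-1}\otimes F$, counit $\epsilon(K)=1$, $\epsilon(E)=\epsilon(F)=0$. It acts on $\mathcal{A}(SU_q(2))$ from the left, $g\otimes x\mapsto g\triangleright x$, making $\mathcal{A}(SU_q(2))$ a left module algebra ($g\triangleright(xy)=\sum(g_{(1)}\triangleright x)(g_{(2)}\triangleright y)$, $g\triangleright1=\epsilon(g)1$), with $K\triangleright a=q^{-1/2}a$, $K\triangleright c=q^{-1/2}c$, $K\triangleright a^*=q^{1/2}a^*$, $K\triangleright c^*=q^{1/2}c^*$. For $n\in\mathbb{Z}$ let $\mathcal{L}_n=\{x\in\mathcal{A}(SU_q(2)):K\triangleright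 x=q^{n/2}x\}$; then $\mathcal{L}_n\mathcal{L}_m\subseteq\mathcal{L}_{n+m}$. The coordinate algebra of the quantum projective line is $\mathcal{A}(\mathbb{CP}^1_q):=\mathcal{L}_0$ (the $*$-subalgebra generated by $ac^*,ca^*,cc^*$), and each $\mathcal{L}_n$ is an $\mathcal{A}(\mathbb{CP}^1_q)$-bimodule under multiplication. *)

theory Defs
  imports Complex_Main
begin

datatype gen = GA | GAs | GC | GCs
  \<comment> \<open>GA = a, GAs = a*, GC = c, GCs = c*\<close>

type_synonym fw = "gen list \<Rightarrow> complex"
  \<comment> \<open>elements of the free algebra: finitely supported coefficient functions on words\<close>

definition fsupp :: "('b \<Rightarrow> complex) \<Rightarrow> 'b set" where
  "fsupp f = {w. f w \<noteq> 0}"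

definition fin :: "('b \<Rightarrow> complex) \<Rightarrow> bool" where
  "fin f \<longleftrightarrow> finite (fsupp f)"

definition vzero :: "'b \<Rightarrow> complex" where
  "vzero = (\<lambda>_. 0)"

definition vadd :: "('b \<Rightarrow> complex) \<Rightarrow> ('b \<Rightarrow> complex) \<Rightarrow> 'b \<Rightarrow> complex" where
  "vadd f g = (\<lambda>w. f w + g w)"

definition vscale :: "complex \<Rightarrow> ('b \<Rightarrow> complex) \<Rightarrow> 'b \<Rightarrow> complex" where
  "vscale c f = (\<lambda>w. c * f w)"

definition vsub :: "('b \<Rightarrow> complex) \<Rightarrow> ('b \<Rightarrow> complex) \<Rightarrow> 'b \<Rightarrow> complex" where
  "vsub f g = (\<lambda>w. f w - g w)"

definition delta :: "'b \<Rightarrow> 'b \<Rightarrow> complex" where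
  "delta x = (\<lambda>y. if y = x then 1 else 0)"

inductive_set cspan :: "('b \<Rightarrow> complex) set \<Rightarrow> ('b \<Rightarrow> complex) set" for S where
  span_zero: "vzero \<in> cspan S"
| span_gen: "v \<in> S \<Longrightarrow> v \<in> cspan S"
| span_add: "u \<in> cspan S \<Longrightarrow> v \<in> cspan S \<Longrightarrow> vadd u v \<in> cspan S"
| span_scale: "v \<in> cspan S \<Longrightarrow> vscale c v \<in> cspan S"

text \<open>Multiplication of the free algebra (concatenation of words, extended bilinearly).\<close>
definition fmul :: "fw \<Rightarrow> fw \<Rightarrow> fw" where
  "fmul f g = (\<lambda>w. \<Sum>i\<le>length w. f (take i w) * g (drop i w))"

definition fone :: fw where "fone = delta []"
definition ga :: fw where "ga = delta [GA]"
definition gas :: fw where "gas = delta [GAs]"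
definition gc :: fw where "gc = delta [GC]"
definition gcs :: fw where "gcs = delta [GCs]"

text \<open>The defining relations, together with the adjoints of the non-selfadjoint ones
  (so that the ideal generated is a *-ideal; q is real).\<close>
definition suq_rels :: "real \<Rightarrow> fw set" where
  "suq_rels q =
    { vsub (fmul ga gc) (vscale (of_real q) (fmul gc ga)),
      vsub (fmul ga gcs) (vscale (of_real q) (fmul gcs ga)),
      vsub (fmul gc gcs) (fmul gcs gc),
      vsub (vadd (fmul gas ga) (fmul gcs gc)) fone,
      vsub (vadd (fmul ga gas) (vscale (of_real (q^2)) (fmul gc gcs))) fone,
      vsub (fmul gcs gas) (vscale (of_real q) (fmul gas gcs)),
      vsub (fmul gc gas) (vscale (of_real q) (fmul gas gc)) }"

text \<open>The two-sided ideal generated by the relations; A(SU_q(2)) is the quotient of the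
  finitely supported elements of the free algebra by it.\<close>
definition suq_ideal :: "real \<Rightarrow> fw set" where
  "suq_ideal q = cspan {fmul (fmul u r) v | u r v. fin u \<and> fin v \<and> r \<in> suq_rels q}"

definition equiv_suq :: "real \<Rightarrow> fw \<Rightarrow> fw \<Rightarrow> bool" where
  "equiv_suq q x y \<longleftrightarrow> vsub x y \<in> suq_ideal q"

text \<open>K is group-like, so it acts by an algebra automorphism determined by its values on
  the generators; on the free algebra it acts on a word by the product of the generator
  eigenvalues (and this descends to the quotient).\<close>
fun Kgen :: "real \<Rightarrow> gen \<Rightarrow> real" where
  "Kgen q GA = q powr (-1/2)"
| "Kgen q GC = q powr (-1/2)"
| "Kgen q GAs = q powr (1/2)"
| "Kgen q GCs = q powr (1/2)"

definition Kact :: "real \<Rightarrow> fw \<Rightarrow> fw" where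
  "Kact q f = (\<lambda>w. of_real (\<Prod>g\<leftarrow>w. Kgen q g) * f w)"

text \<open>Representatives of elements of L_n: K acts by q^(n/2) modulo the ideal.\<close>
definition Lrep :: "real \<Rightarrow> int \<Rightarrow> fw set" where
  "Lrep q n = {x. fin x \<and> equiv_suq q (Kact q x) (vscale (of_real (q powr (real_of_int n / 2))) x)}"

section \<open>The balanced tensor product L_n \<otimes> L_m over A(CP^1_q) = L_0\<close>

definition tens_free :: "real \<Rightarrow> int \<Rightarrow> int \<Rightarrow> (fw \<times> fw \<Rightarrow> complex) set" where
  "tens_free q n m = {t. fin t \<and> fsupp t \<subseteq> Lrep q n \<times> Lrep q m}"

text \<open>Relations defining the tensor product over L_0: independence of the chosen
  representatives, bilinearity, and L_0-balancedness.\<close>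
definition tens_rels :: "real \<Rightarrow> int \<Rightarrow> int \<Rightarrow> (fw \<times> fw \<Rightarrow> complex) set" where
  "tens_rels q n m =
     {vsub (delta (x, y)) (delta (x', y)) | x x' y.
        x \<in> Lrep q n \<and> x' \<in> Lrep q n \<and> y \<in> Lrep q m \<and> equiv_suq q x x'}
   \<union> {vsub (delta (x, y)) (delta (x, y')) | x y y'.
        x \<in> Lrep q n \<and> y \<in> Lrep q m \<and> y' \<in> Lrep q m \<and> equiv_suq q y y'}
   \<union> {vsub (delta (vadd x x', y)) (vadd (delta (x, y)) (delta (x', y))) | x x' y.
        x \<in> Lrep q n \<and> x' \<in> Lrep q n \<and> y \<in> Lrep q m}
   \<union> {vsub (delta (x, vadd y y')) (vadd (delta (x, y)) (delta (x, y'))) | x y y'.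
        x \<in> Lrep q n \<and> y \<in> Lrep q m \<and> y' \<in> Lrep q m}
   \<union> {vsub (delta (vscale c x, y)) (vscale c (delta (x, y))) | c x y.
        x \<in> Lrep q n \<and> y \<in> Lrep q m}
   \<union> {vsub (delta (x, vscale c y)) (vscale c (delta (x, y))) | c x y.
        x \<in> Lrep q n \<and> y \<in> Lrep q m}
   \<union> {vsub (delta (fmul x b, y)) (delta (x, fmul b y)) | x b y.
        x \<in> Lrep q n \<and> b \<in> Lrep q 0 \<and> y \<in> Lrep q m}"

definition tens_null :: "real \<Rightarrow> int \<Rightarrow> int \<Rightarrow> (fw \<times> fw \<Rightarrow> complex) set" where
  "tens_null q n m = cspan (tens_rels q n m)"

definition tens_mult :: "(fw \<times> fw \<Rightarrow> complex) \<Rightarrow> fw" where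
  "tens_mult t = (\<lambda>w. \<Sum>p\<in>fsupp t. t p * fmul (fst p) (snd p) w)"

end

theory Submission
  imports Defs "HOL-Library.Function_Algebras" "HOL-Library.Nat_Bijection"
begin

text \<open>The line bundles are strongly graded: for every \<open>n\<close> there are \<open>U\<^sub>i \<in> \<L>\<^sub>n\<close>, \<open>V\<^sub>i \<in> \<L>\<^sub>-\<^sub>n\<close>
  with \<open>\<Sum> U\<^sub>i V\<^sub>i = 1\<close>, obtained from \<open>a\<^sup>*a + c\<^sup>*c = 1\<close>, \<open>aa\<^sup>* + q\<^sup>2cc\<^sup>* = 1\<close> and products of such
  decompositions. Then \<open>z \<mapsto> \<Sum> U\<^sub>i \<otimes> V\<^sub>i z\<close> inverts multiplication: it is a right inverse since
  \<open>\<Sum> U\<^sub>i V\<^sub>i z = z\<close>, and a left inverse since \<open>x \<otimes> y = \<Sum> U\<^sub>i V\<^sub>i x \<otimes> y = \<Sum> U\<^sub>i \<otimes> V\<^sub>i x y\<close>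
  by balancedness, \<open>V\<^sub>i x\<close> lying in \<open>\<L>\<^sub>0\<close>.\<close>

text \<open>As simp rules, the pointwise application rules would eta-expand every \<open>f + g\<close>, \<open>0\<close>
  or \<open>vscale c f\<close> into a lambda.\<close>

declare plus_fun_apply [simp del] zero_fun_apply [simp del] minus_apply [simp del]
  uminus_apply [simp del]

lemma vscale_apply: "vscale c f w = c * f w"
  by (simp add: vscale_def)

lemmas fun_apply_simps = plus_fun_apply zero_fun_apply minus_apply uminus_apply vscale_apply

lemma vzero_eq: "vzero = 0"
  and vadd_eq: "vadd f g = f + g"
  and vsub_eq: "vsub f g = f - g"
  by (auto simp: vzero_def vadd_def vsub_def fun_eq_iff fun_apply_simps)

lemmas vector_ops_eq = vzero_eq vadd_eq vsub_eq

lemma sum_apply: "(\<Sum>p\<in>S. f p) w = (\<Sum>p\<in>S. f p w)"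
  by (induction S rule: infinite_finite_induct) (auto simp: fun_apply_simps)

lemma vscale_add: "vscale c (f + g) = vscale c f + vscale c g"
  and vscale_diff: "vscale c (f - g) = vscale c f - vscale c g"
  and vscale_add_left: "vscale (a + b) f = vscale a f + vscale b f"
  and vscale_diff_left: "vscale (a - b) f = vscale a f - vscale b f"
  and vscale_zero [simp]: "vscale c 0 = 0"
  and vscale_one [simp]: "vscale 1 f = f"
  and vscale_zero_left [simp]: "vscale 0 f = 0"
  and vscale_minus_one: "vscale (-1) f = - f"
  and vscale_vscale: "vscale c (vscale d f) = vscale (c * d) f"
  by (auto simp: fun_eq_iff fun_apply_simps algebra_simps)

lemma vscale_sum: "vscale c (\<Sum>p\<in>S. f p) = (\<Sum>p\<in>S. vscale c (f p))"
  by (auto simp: fun_eq_iff fun_apply_simps sum_apply sum_distrib_left)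

lemma cspan_zero [simp]: "0 \<in> cspan S"
  using cspan.span_zero by (simp add: vzero_eq)

lemma cspan_add: "u \<in> cspan S \<Longrightarrow> v \<in> cspan S \<Longrightarrow> u + v \<in> cspan S"
  using cspan.span_add by (metis vadd_eq)

lemma cspan_scale: "u \<in> cspan S \<Longrightarrow> vscale c u \<in> cspan S"
  by (rule cspan.span_scale)

lemma cspan_neg: "u \<in> cspan S \<Longrightarrow> - u \<in> cspan S"
  using cspan_scale[of u S "-1"] by (simp add: vscale_minus_one)

lemma cspan_diff: "u \<in> cspan S \<Longrightarrow> v \<in> cspan S \<Longrightarrow> u - v \<in> cspan S"
  using cspan_add[OF _ cspan_neg] by (metis diff_conv_add_uminus)

lemma cspan_sum: "(\<And>p. p \<in> A \<Longrightarrow> f p \<in> cspan S) \<Longrightarrow> (\<Sum>p\<in>A. f p) \<in> cspan S"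
  by (induction A rule: infinite_finite_induct) (auto intro: cspan_add)

lemma fin_zero [simp]: "fin 0"
  by (simp add: fin_def fsupp_def fun_apply_simps)

lemma fin_add: "fin f \<Longrightarrow> fin g \<Longrightarrow> fin (f + g)"
  unfolding fin_def fsupp_def
  by (rule finite_subset[of _ "{w. f w \<noteq> 0} \<union> {w. g w \<noteq> 0}"]) (auto simp: fun_apply_simps)

lemma fin_scale: "fin f \<Longrightarrow> fin (vscale c f)"
  unfolding fin_def fsupp_def
  by (rule finite_subset[of _ "{w. f w \<noteq> 0}"]) (auto simp: fun_apply_simps)

lemma fin_diff: "fin f \<Longrightarrow> fin g \<Longrightarrow> fin (f - g)"
  by (metis diff_conv_add_uminus fin_add fin_scale vscale_minus_one)

lemma fin_sum: "(\<And>p. p \<in> A \<Longrightarrow> fin (f p)) \<Longrightarrow> fin (\<Sum>p\<in>A. f p)"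
  by (induction A rule: infinite_finite_induct) (auto intro: fin_add)

lemma fsupp_delta [simp]: "fsupp (delta p) = {p}"
  by (auto simp: fsupp_def delta_def)

lemma fin_delta [simp]: "fin (delta p)"
  by (simp add: fin_def)

lemma fsupp_sum: "fsupp (\<Sum>p\<in>A. f p) \<subseteq> (\<Union>p\<in>A. fsupp (f p))"
  by (induction A rule: infinite_finite_induct) (auto simp: fsupp_def fun_apply_simps)

lemma fin_eq_sum_delta: "fin t \<Longrightarrow> t = (\<Sum>p\<in>fsupp t. vscale (t p) (delta p))"
  by (auto simp: fun_eq_iff fun_apply_simps sum_apply delta_def fin_def fsupp_def if_distrib cong: if_cong)

definition splits :: "'a list \<Rightarrow> ('a list \<times> 'a list) set" where
  "splits w = {(u, v). u @ v = w}"

lemma splits_eq_image: "splits w = (\<lambda>i. (take i w, drop i w)) ` {..length w}"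
proof -
  have "(u, v) \<in> (\<lambda>i. (take i w, drop i w)) ` {..length w}" if "u @ v = w" for u v
    using that by (intro image_eqI[of _ _ "length u"]) auto
  thus ?thesis unfolding splits_def by auto
qed

lemma finite_splits [simp]: "finite (splits w)"
  by (simp add: splits_eq_image)

lemma fmul_eq_sum_splits: "fmul f g w = (\<Sum>(u, v)\<in>splits w. f u * g v)"
proof -
  have "inj_on (\<lambda>i. (take i w, drop i w)) {..length w}"
    by (auto simp: inj_on_def) (metis length_take min.absorb2)
  thus ?thesis unfolding splits_eq_image fmul_def by (simp add: sum.reindex)
qed

lemma fmul_add_left: "fmul (f + g) h = fmul f h + fmul g h"
  and fmul_add_right: "fmul h (f + g) = fmul h f + fmul h g"
  and fmul_diff_left: "fmul (f - g) h = fmul f h - fmul g h"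
  and fmul_diff_right: "fmul h (f - g) = fmul h f - fmul h g"
  and fmul_zero_left [simp]: "fmul 0 h = 0"
  and fmul_zero_right [simp]: "fmul h 0 = 0"
  and fmul_scale_left: "fmul (vscale c f) h = vscale c (fmul f h)"
  and fmul_scale_right: "fmul h (vscale c f) = vscale c (fmul h f)"
  by (auto simp: fun_eq_iff fun_apply_simps fmul_def algebra_simps sum.distrib sum_subtractf sum_distrib_left)

lemma fmul_sum_left: "fmul (\<Sum>p\<in>A. f p) h = (\<Sum>p\<in>A. fmul (f p) h)"
  by (induction A rule: infinite_finite_induct) (simp_all add: fmul_add_left)

lemma fmul_sum_right: "fmul h (\<Sum>p\<in>A. f p) = (\<Sum>p\<in>A. fmul h (f p))"
  by (induction A rule: infinite_finite_induct) (simp_all add: fmul_add_right)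

lemma fmul_one_left [simp]: "fmul fone f = f"
proof (rule ext)
  fix w
  have "fmul fone f w = (\<Sum>p\<in>splits w. if p = ([], w) then f w else 0)"
    unfolding fmul_eq_sum_splits fone_def delta_def
    by (rule sum.cong) (auto simp: splits_def split: if_splits)
  also have "\<dots> = f w" by (subst sum.delta[OF finite_splits]) (simp add: splits_def)
  finally show "fmul fone f w = f w" .
qed

lemma fmul_one_right [simp]: "fmul f fone = f"
proof (rule ext)
  fix w
  have "fmul f fone w = (\<Sum>p\<in>splits w. if p = (w, []) then f w else 0)"
    unfolding fmul_eq_sum_splits fone_def delta_def
    by (rule sum.cong) (auto simp: splits_def split: if_splits)
  also have "\<dots> = f w" by (subst sum.delta[OF finite_splits]) (simp add: splits_def)
  finally show "fmul f fone w = f w" .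
qed

lemma fmul_assoc: "fmul (fmul f g) h = fmul f (fmul g h)"
proof (rule ext)
  fix w
  define F where "F a b c = f a * g b * h c" for a b c :: "gen list"
  have "fmul (fmul f g) h w = (\<Sum>p\<in>splits w. \<Sum>r\<in>splits (fst p). F (fst r) (snd r) (snd p))"
    unfolding fmul_eq_sum_splits F_def by (auto simp: sum_distrib_right case_prod_beta intro!: sum.cong)
  also have "\<dots> = (\<Sum>z\<in>Sigma (splits w) (\<lambda>p. splits (fst p)). F (fst (snd z)) (snd (snd z)) (snd (fst z)))"
    by (simp add: sum.Sigma case_prod_beta)
  also have "\<dots> = (\<Sum>z\<in>Sigma (splits w) (\<lambda>p. splits (snd p)). F (fst (fst z)) (fst (snd z)) (snd (snd z)))"
    by (rule sum.reindex_bij_witness[where i="\<lambda>((u, y), (v, x)). ((u @ v, x), (u, v))"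
          and j="\<lambda>((s, x), (u, v)). ((u, v @ x), (v, x))"]) (auto simp: splits_def)
  also have "\<dots> = (\<Sum>p\<in>splits w. \<Sum>r\<in>splits (snd p). F (fst p) (fst r) (snd r))"
    by (simp add: sum.Sigma case_prod_beta)
  also have "\<dots> = fmul f (fmul g h) w"
    unfolding fmul_eq_sum_splits F_def
    by (auto simp: sum_distrib_left case_prod_beta mult.assoc intro!: sum.cong)
  finally show "fmul (fmul f g) h w = fmul f (fmul g h) w" .
qed

lemma fin_fone [simp]: "fin fone"
  by (simp add: fone_def)

lemma fin_fmul: "fin f \<Longrightarrow> fin g \<Longrightarrow> fin (fmul f g)"
proof -
  assume "fin f" "fin g"
  have "fsupp (fmul f g) \<subseteq> (\<lambda>(u, v). u @ v) ` (fsupp f \<times> fsupp g)"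
  proof
    fix w assume "w \<in> fsupp (fmul f g)"
    hence "(\<Sum>(u, v)\<in>splits w. f u * g v) \<noteq> 0" by (simp add: fsupp_def fmul_eq_sum_splits)
    then obtain u v where "(u, v) \<in> splits w" "f u * g v \<noteq> 0"
      by (metis (mono_tags, lifting) case_prod_conv sum.neutral surj_pair)
    thus "w \<in> (\<lambda>(u, v). u @ v) ` (fsupp f \<times> fsupp g)"
      by (auto simp: splits_def fsupp_def)
  qed
  thus ?thesis using \<open>fin f\<close> \<open>fin g\<close> unfolding fin_def by (auto intro: finite_subset)
qed

lemma Kact_add: "Kact q (f + g) = Kact q f + Kact q g"
  and Kact_scale: "Kact q (vscale c f) = vscale c (Kact q f)"
  and Kact_zero [simp]: "Kact q 0 = 0"
  by (auto simp: fun_eq_iff fun_apply_simps Kact_def algebra_simps)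

lemma fin_Kact: "fin f \<Longrightarrow> fin (Kact q f)"
  unfolding fin_def fsupp_def Kact_def by (rule finite_subset[of _ "{w. f w \<noteq> 0}"]) auto

lemma Kact_fmul: "Kact q (fmul f g) = fmul (Kact q f) (Kact q g)"
proof (rule ext)
  fix w
  have "prod_list (map (Kgen q) w)
      = prod_list (map (Kgen q) (take i w)) * prod_list (map (Kgen q) (drop i w))" for i
    by (metis append_take_drop_id map_append prod_list.append)
  thus "Kact q (fmul f g) w = fmul (Kact q f) (Kact q g) w"
    unfolding Kact_def fmul_def sum_distrib_left
    by (intro sum.cong refl) (metis (no_types) mult.assoc mult.left_commute of_real_mult)
qed

lemma Kact_one [simp]: "Kact q fone = fone"
  by (auto simp: fun_eq_iff fun_apply_simps Kact_def fone_def delta_def)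

lemma Kact_gen: "Kact q (delta [g]) = vscale (of_real (Kgen q g)) (delta [g])"
  by (auto simp: fun_eq_iff fun_apply_simps Kact_def delta_def)

lemma suq_ideal_zero [simp]: "0 \<in> suq_ideal q"
  and suq_ideal_add: "x \<in> suq_ideal q \<Longrightarrow> y \<in> suq_ideal q \<Longrightarrow> x + y \<in> suq_ideal q"
  and suq_ideal_neg: "x \<in> suq_ideal q \<Longrightarrow> - x \<in> suq_ideal q"
  and suq_ideal_scale: "x \<in> suq_ideal q \<Longrightarrow> vscale c x \<in> suq_ideal q"
  by (simp_all add: suq_ideal_def cspan_add cspan_neg cspan_scale)

lemma suq_ideal_sum: "(\<And>p. p \<in> A \<Longrightarrow> f p \<in> suq_ideal q) \<Longrightarrow> (\<Sum>p\<in>A. f p) \<in> suq_ideal q"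
  by (simp add: suq_ideal_def cspan_sum)

lemma suq_ideal_fmul_left: "x \<in> suq_ideal q \<Longrightarrow> fin w \<Longrightarrow> fmul w x \<in> suq_ideal q"
  unfolding suq_ideal_def
proof (induction x rule: cspan.induct)
  case (span_gen v)
  then obtain u r v' where "v = fmul (fmul u r) v'" "fin u" "fin v'" "r \<in> suq_rels q" by blast
  hence "fmul w v = fmul (fmul (fmul w u) r) v'" "fin (fmul w u)"
    using span_gen by (simp_all add: fmul_assoc fin_fmul)
  thus ?case using \<open>fin v'\<close> \<open>r \<in> suq_rels q\<close> by (intro cspan.span_gen) blast
qed (simp_all add: vector_ops_eq fmul_add_right fmul_scale_right cspan_add cspan_scale)

lemma suq_ideal_fmul_right: "x \<in> suq_ideal q \<Longrightarrow> fin w \<Longrightarrow> fmul x w \<in> suq_ideal q"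
  unfolding suq_ideal_def
proof (induction x rule: cspan.induct)
  case (span_gen v)
  then obtain u r v' where "v = fmul (fmul u r) v'" "fin u" "fin v'" "r \<in> suq_rels q" by blast
  hence "fmul v w = fmul (fmul u r) (fmul v' w)" "fin (fmul v' w)"
    using span_gen by (simp_all add: fmul_assoc fin_fmul)
  thus ?case using \<open>fin u\<close> \<open>r \<in> suq_rels q\<close> by (intro cspan.span_gen) blast
qed (simp_all add: vector_ops_eq fmul_add_left fmul_scale_left cspan_add cspan_scale)

lemma suq_rels_in_ideal: "r \<in> suq_rels q \<Longrightarrow> r \<in> suq_ideal q"
proof -
  assume "r \<in> suq_rels q"
  hence "fmul (fmul fone r) fone \<in> {fmul (fmul u r) v | u r v. fin u \<and> fin v \<and> r \<in> suq_rels q}"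
    using fin_fone by blast
  thus ?thesis unfolding suq_ideal_def by (auto intro: cspan.span_gen)
qed

lemma Lrep_iff:
  "x \<in> Lrep q k \<longleftrightarrow> fin x \<and> Kact q x - vscale (of_real (q powr (real_of_int k / 2))) x \<in> suq_ideal q"
  by (simp add: Lrep_def equiv_suq_def vsub_eq)

lemma Lrep_fin: "x \<in> Lrep q k \<Longrightarrow> fin x"
  by (simp add: Lrep_iff)

lemma Lrep_zero [simp]: "0 \<in> Lrep q k"
  by (simp add: Lrep_iff)

lemma Lrep_add: "x \<in> Lrep q k \<Longrightarrow> y \<in> Lrep q k \<Longrightarrow> x + y \<in> Lrep q k"
  by (auto simp: Lrep_iff fin_add Kact_add vscale_add add_diff_add dest: suq_ideal_add)

lemma Lrep_scale: "x \<in> Lrep q k \<Longrightarrow> vscale c x \<in> Lrep q k"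
proof -
  assume x: "x \<in> Lrep q k"
  let ?l = "of_real (q powr (real_of_int k / 2)) :: complex"
  have "Kact q (vscale c x) - vscale ?l (vscale c x) = vscale c (Kact q x - vscale ?l x)"
    by (simp add: Kact_scale vscale_diff vscale_vscale mult.commute)
  thus ?thesis using x by (simp add: Lrep_iff fin_scale suq_ideal_scale)
qed

lemma Lrep_sum: "(\<And>p. p \<in> A \<Longrightarrow> f p \<in> Lrep q k) \<Longrightarrow> (\<Sum>p\<in>A. f p) \<in> Lrep q k"
  by (induction A rule: infinite_finite_induct) (auto intro: Lrep_add)

lemma Lrep_fmul: "x \<in> Lrep q n \<Longrightarrow> y \<in> Lrep q m \<Longrightarrow> fmul x y \<in> Lrep q (n + m)"
proof -
  assume x: "x \<in> Lrep q n" and y: "y \<in> Lrep q m"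
  define l where "l = (of_real (q powr (real_of_int n / 2)) :: complex)"
  define u where "u = (of_real (q powr (real_of_int m / 2)) :: complex)"
  have "of_real (q powr (real_of_int (n + m) / 2)) = l * u"
    unfolding l_def u_def by (simp add: add_divide_distrib powr_add)
  moreover have "Kact q (fmul x y) - vscale (l * u) (fmul x y)
      = fmul (Kact q x - vscale l x) (Kact q y) + vscale l (fmul x (Kact q y - vscale u y))"
    by (simp add: Kact_fmul fmul_diff_left fmul_diff_right fmul_scale_left fmul_scale_right
        vscale_diff vscale_vscale)
  moreover have "\<dots> \<in> suq_ideal q"
    using x y by (intro suq_ideal_add suq_ideal_scale suq_ideal_fmul_left suq_ideal_fmul_right)
      (simp_all add: Lrep_iff l_def u_def fin_Kact)
  ultimately show ?thesis using x y by (simp add: Lrep_iff fin_fmul)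
qed

lemma Lrep_fmul_neg_left: "v \<in> Lrep q (- n) \<Longrightarrow> z \<in> Lrep q (n + m) \<Longrightarrow> fmul v z \<in> Lrep q m"
  using Lrep_fmul[of v q "- n" z "n + m"] by simp

lemma Lrep_generators: "ga \<in> Lrep q (-1)" "gc \<in> Lrep q (-1)" "gas \<in> Lrep q 1" "gcs \<in> Lrep q 1"
  by (simp_all add: Lrep_iff ga_def gas_def gc_def gcs_def Kact_gen)

section \<open>Strong grading\<close>

text \<open>Decompositions are indexed by naturals; the product of two of them, naturally indexed by
  \<open>J \<times> J'\<close>, is reindexed through \<^const>\<open>prod_encode\<close>.\<close>

definition unit_decomposition :: "real \<Rightarrow> int \<Rightarrow> nat set \<Rightarrow> (nat \<Rightarrow> fw) \<Rightarrow> (nat \<Rightarrow> fw) \<Rightarrow> bool" where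
  "unit_decomposition q n J U V \<longleftrightarrow> finite J \<and> (\<forall>i\<in>J. U i \<in> Lrep q n \<and> V i \<in> Lrep q (- n))
     \<and> (\<Sum>i\<in>J. fmul (U i) (V i)) - fone \<in> suq_ideal q"

lemma unit_decomposition_zero: "0 < q \<Longrightarrow> unit_decomposition q 0 {0} (\<lambda>_. fone) (\<lambda>_. fone)"
  by (simp add: unit_decomposition_def Lrep_iff)

lemma unit_decomposition_one:
  "unit_decomposition q 1 {0, 1} (\<lambda>i. if i = 0 then gas else gcs) (\<lambda>i. if i = 0 then ga else gc)"
proof -
  have "vsub (vadd (fmul gas ga) (fmul gcs gc)) fone \<in> suq_ideal q"
    by (rule suq_rels_in_ideal) (simp add: suq_rels_def)
  thus ?thesis by (simp add: unit_decomposition_def vector_ops_eq Lrep_generators)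
qed

lemma unit_decomposition_minus_one:
  "unit_decomposition q (- 1) {0, 1}
     (\<lambda>i. if i = 0 then ga else vscale (of_real (q\<^sup>2)) gc) (\<lambda>i. if i = 0 then gas else gcs)"
proof -
  have "vsub (vadd (fmul ga gas) (vscale (of_real (q\<^sup>2)) (fmul gc gcs))) fone \<in> suq_ideal q"
    by (rule suq_rels_in_ideal) (simp add: suq_rels_def)
  thus ?thesis
    by (simp add: unit_decomposition_def vector_ops_eq fmul_scale_left Lrep_generators Lrep_scale)
qed

lemma unit_decomposition_fmul:
  assumes "unit_decomposition q n J U V" and "unit_decomposition q k J' U' V'"
  shows "unit_decomposition q (n + k) (prod_encode ` (J \<times> J'))
           (\<lambda>l. case prod_decode l of (i, j) \<Rightarrow> fmul (U i) (U' j))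
           (\<lambda>l. case prod_decode l of (i, j) \<Rightarrow> fmul (V' j) (V i))"
proof -
  have J: "finite J" "\<And>i. i \<in> J \<Longrightarrow> U i \<in> Lrep q n \<and> V i \<in> Lrep q (- n)"
      "(\<Sum>i\<in>J. fmul (U i) (V i)) - fone \<in> suq_ideal q"
    and J': "finite J'" "\<And>j. j \<in> J' \<Longrightarrow> U' j \<in> Lrep q k \<and> V' j \<in> Lrep q (- k)"
      "(\<Sum>j\<in>J'. fmul (U' j) (V' j)) - fone \<in> suq_ideal q"
    using assms by (auto simp: unit_decomposition_def)
  define E where "E = (\<Sum>j\<in>J'. fmul (U' j) (V' j))"
  have factors: "fmul (U i) (U' j) \<in> Lrep q (n + k)" "fmul (V' j) (V i) \<in> Lrep q (- (n + k))"
    if "i \<in> J" "j \<in> J'" for i j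
    using Lrep_fmul[of "U i" q n "U' j" k] Lrep_fmul[of "V' j" q "- k" "V i" "- n"] J(2) J'(2) that
    by (auto simp: add.commute)
  have "(\<Sum>l\<in>prod_encode ` (J \<times> J'). case prod_decode l of (i, j) \<Rightarrow>
          fmul (fmul (U i) (U' j)) (fmul (V' j) (V i)))
      = (\<Sum>i\<in>J. fmul (fmul (U i) E) (V i))"
    by (simp add: sum.reindex inj_prod_encode sum.cartesian_product[symmetric] E_def
        fmul_sum_left fmul_sum_right fmul_assoc)
  also have "\<dots> = (\<Sum>i\<in>J. fmul (fmul (U i) (E - fone)) (V i)) + (\<Sum>i\<in>J. fmul (U i) (V i))"
    by (simp add: fmul_diff_right fmul_diff_left sum_subtractf)
  finally have "(\<Sum>l\<in>prod_encode ` (J \<times> J'). case prod_decode l of (i, j) \<Rightarrow>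
          fmul (fmul (U i) (U' j)) (fmul (V' j) (V i))) - fone
      = (\<Sum>i\<in>J. fmul (fmul (U i) (E - fone)) (V i)) + ((\<Sum>i\<in>J. fmul (U i) (V i)) - fone)"
    by simp
  also have "\<dots> \<in> suq_ideal q"
    using J J' by (intro suq_ideal_add suq_ideal_sum suq_ideal_fmul_left suq_ideal_fmul_right)
      (auto simp: E_def intro: Lrep_fin)
  finally show ?thesis
    using J(1) J'(1) factors
    by (auto simp: unit_decomposition_def case_prod_beta prod_decode_inverse)
qed

lemma unit_decomposition_exists:
  assumes "0 < q" shows "\<exists>J U V. unit_decomposition q n J U V"
proof (induction n rule: int_induct[where k = 0])
  case base thus ?case using unit_decomposition_zero[OF assms] by blast
next
  case (step1 i) thus ?case using unit_decomposition_fmul[OF _ unit_decomposition_one] by blast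
next
  case (step2 i) thus ?case using unit_decomposition_fmul[OF _ unit_decomposition_minus_one] by fastforce
qed

lemma tens_mult_eq_sum:
  assumes "finite S" "fsupp t \<subseteq> S"
  shows "tens_mult t = (\<Sum>p\<in>S. vscale (t p) (fmul (fst p) (snd p)))"
proof -
  have "(\<Sum>p\<in>fsupp t. t p * fmul (fst p) (snd p) w) = (\<Sum>p\<in>S. t p * fmul (fst p) (snd p) w)" for w
    by (rule sum.mono_neutral_left) (use assms in \<open>auto simp: fsupp_def\<close>)
  thus ?thesis by (simp add: fun_eq_iff fun_apply_simps tens_mult_def sum_apply)
qed

lemma tens_mult_add: "fin s \<Longrightarrow> fin t \<Longrightarrow> tens_mult (s + t) = tens_mult s + tens_mult t"
  and tens_mult_diff: "fin s \<Longrightarrow> fin t \<Longrightarrow> tens_mult (s - t) = tens_mult s - tens_mult t"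
proof -
  assume "fin s" "fin t"
  hence S: "finite (fsupp s \<union> fsupp t)" by (simp add: fin_def)
  have "fsupp (s + t) \<subseteq> fsupp s \<union> fsupp t" "fsupp (s - t) \<subseteq> fsupp s \<union> fsupp t"
    by (auto simp: fsupp_def fun_apply_simps)
  thus "tens_mult (s + t) = tens_mult s + tens_mult t" "tens_mult (s - t) = tens_mult s - tens_mult t"
    using tens_mult_eq_sum[OF S] by (simp_all add: fun_apply_simps vscale_add_left vscale_diff_left
        sum.distrib sum_subtractf)
qed

lemma tens_mult_scale: "fin t \<Longrightarrow> tens_mult (vscale c t) = vscale c (tens_mult t)"
  using tens_mult_eq_sum[of "fsupp t" t] tens_mult_eq_sum[of "fsupp t" "vscale c t"]
  by (auto simp: fin_def fsupp_def vscale_sum vscale_vscale vscale_apply)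

lemma tens_mult_delta [simp]: "tens_mult (delta p) = fmul (fst p) (snd p)"
  by (simp add: tens_mult_eq_sum[of "{p}"]) (simp add: delta_def)

lemma tens_mult_zero [simp]: "tens_mult 0 = 0"
  by (simp add: fun_eq_iff fun_apply_simps tens_mult_def fsupp_def)

lemma tens_mult_sum:
  "(\<And>a. a \<in> A \<Longrightarrow> fin (f a)) \<Longrightarrow> tens_mult (\<Sum>a\<in>A. f a) = (\<Sum>a\<in>A. tens_mult (f a))"
  by (induction A rule: infinite_finite_induct) (simp_all add: tens_mult_add fin_sum)

lemma tens_mult_mem_Lrep: "t \<in> tens_free q n m \<Longrightarrow> tens_mult t \<in> Lrep q (n + m)"
  using tens_mult_eq_sum[of "fsupp t" t]
  by (auto simp: tens_free_def fin_def intro!: Lrep_sum Lrep_scale Lrep_fmul)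

lemma tens_mult_tens_rels:
  assumes "v \<in> tens_rels q n m" shows "fin v \<and> tens_mult v \<in> suq_ideal q"
  using assms unfolding tens_rels_def vector_ops_eq equiv_suq_def
  by (auto simp: fin_diff fin_add fin_scale tens_mult_diff tens_mult_add tens_mult_scale
      fmul_add_left fmul_add_right fmul_scale_left fmul_scale_right fmul_assoc
      simp flip: fmul_diff_left fmul_diff_right
      intro: suq_ideal_fmul_left[OF _ Lrep_fin] suq_ideal_fmul_right[OF _ Lrep_fin])

lemma tens_mult_tens_null: "t \<in> tens_null q n m \<Longrightarrow> tens_mult t \<in> suq_ideal q"
proof -
  assume "t \<in> tens_null q n m"
  hence "fin t \<and> tens_mult t \<in> suq_ideal q" unfolding tens_null_def
  proof (induction t rule: cspan.induct)
    case (span_gen v) thus ?case by (rule tens_mult_tens_rels)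
  qed (simp_all add: vector_ops_eq fin_add fin_scale tens_mult_add tens_mult_scale
      suq_ideal_add suq_ideal_scale)
  thus ?thesis ..
qed

lemma tens_null_zero [simp]: "0 \<in> tens_null q n m"
  and tens_null_add: "s \<in> tens_null q n m \<Longrightarrow> t \<in> tens_null q n m \<Longrightarrow> s + t \<in> tens_null q n m"
  and tens_null_diff: "s \<in> tens_null q n m \<Longrightarrow> t \<in> tens_null q n m \<Longrightarrow> s - t \<in> tens_null q n m"
  and tens_null_scale: "t \<in> tens_null q n m \<Longrightarrow> vscale c t \<in> tens_null q n m"
  by (simp_all add: tens_null_def cspan_add cspan_diff cspan_scale)

lemma tens_null_sum:
  "(\<And>p. p \<in> A \<Longrightarrow> f p \<in> tens_null q n m) \<Longrightarrow> (\<Sum>p\<in>A. f p) \<in> tens_null q n m"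
  by (simp add: tens_null_def cspan_sum)

lemma tens_null_trans:
  "r - s \<in> tens_null q n m \<Longrightarrow> s - t \<in> tens_null q n m \<Longrightarrow> r - t \<in> tens_null q n m"
  by (drule (1) tens_null_add) simp

lemma tens_rels_subset_tens_null: "v \<in> tens_rels q n m \<Longrightarrow> v \<in> tens_null q n m"
  unfolding tens_null_def by (rule cspan.span_gen)

text \<open>Each relation is selected from the seven-fold union in \<^const>\<open>tens_rels\<close> by its position.\<close>

lemma tens_null_equiv_left:
  "x \<in> Lrep q n \<Longrightarrow> x' \<in> Lrep q n \<Longrightarrow> y \<in> Lrep q m \<Longrightarrow> x - x' \<in> suq_ideal q
    \<Longrightarrow> delta (x, y) - delta (x', y) \<in> tens_null q n m"
  by (rule tens_rels_subset_tens_null, unfold tens_rels_def equiv_suq_def vector_ops_eq)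
    (rule UnI1, rule UnI1, rule UnI1, rule UnI1, rule UnI1, rule UnI1, blast)

lemma tens_null_equiv_right:
  "x \<in> Lrep q n \<Longrightarrow> y \<in> Lrep q m \<Longrightarrow> y' \<in> Lrep q m \<Longrightarrow> y - y' \<in> suq_ideal q
    \<Longrightarrow> delta (x, y) - delta (x, y') \<in> tens_null q n m"
  by (rule tens_rels_subset_tens_null, unfold tens_rels_def equiv_suq_def vector_ops_eq)
    (rule UnI1, rule UnI1, rule UnI1, rule UnI1, rule UnI1, rule UnI2, blast)

lemma tens_null_add_left:
  "x \<in> Lrep q n \<Longrightarrow> x' \<in> Lrep q n \<Longrightarrow> y \<in> Lrep q m
    \<Longrightarrow> delta (x + x', y) - (delta (x, y) + delta (x', y)) \<in> tens_null q n m"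
  by (rule tens_rels_subset_tens_null, unfold tens_rels_def vector_ops_eq)
    (rule UnI1, rule UnI1, rule UnI1, rule UnI1, rule UnI2, blast)

lemma tens_null_add_right:
  "x \<in> Lrep q n \<Longrightarrow> y \<in> Lrep q m \<Longrightarrow> y' \<in> Lrep q m
    \<Longrightarrow> delta (x, y + y') - (delta (x, y) + delta (x, y')) \<in> tens_null q n m"
  by (rule tens_rels_subset_tens_null, unfold tens_rels_def vector_ops_eq)
    (rule UnI1, rule UnI1, rule UnI1, rule UnI2, blast)

lemma tens_null_scale_left:
  "x \<in> Lrep q n \<Longrightarrow> y \<in> Lrep q m \<Longrightarrow> delta (vscale c x, y) - vscale c (delta (x, y)) \<in> tens_null q n m"
  by (rule tens_rels_subset_tens_null, unfold tens_rels_def vector_ops_eq)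
    (rule UnI1, rule UnI1, rule UnI2, blast)

lemma tens_null_scale_right:
  "x \<in> Lrep q n \<Longrightarrow> y \<in> Lrep q m \<Longrightarrow> delta (x, vscale c y) - vscale c (delta (x, y)) \<in> tens_null q n m"
  by (rule tens_rels_subset_tens_null, unfold tens_rels_def vector_ops_eq)
    (rule UnI1, rule UnI2, blast)

lemma tens_null_balanced:
  "x \<in> Lrep q n \<Longrightarrow> b \<in> Lrep q 0 \<Longrightarrow> y \<in> Lrep q m
    \<Longrightarrow> delta (fmul x b, y) - delta (x, fmul b y) \<in> tens_null q n m"
  by (rule tens_rels_subset_tens_null, unfold tens_rels_def vector_ops_eq)
    (rule UnI2, blast)

lemma tens_null_delta_zero_left: "y \<in> Lrep q m \<Longrightarrow> delta (0, y) \<in> tens_null q n m"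
  using tens_null_scale_left[of 0 q n y m 0] by simp

lemma tens_null_delta_zero_right: "x \<in> Lrep q n \<Longrightarrow> delta (x, 0) \<in> tens_null q n m"
  using tens_null_scale_right[of x q n 0 m 0] by simp

lemma tens_null_sum_left:
  assumes "finite J" "\<And>j. j \<in> J \<Longrightarrow> f j \<in> Lrep q n" "y \<in> Lrep q m"
  shows "delta (\<Sum>j\<in>J. f j, y) - (\<Sum>j\<in>J. delta (f j, y)) \<in> tens_null q n m"
  using assms
proof (induction J rule: finite_induct)
  case (insert a F)
  let ?S = "\<Sum>j\<in>F. f j"
  have "delta (f a + ?S, y) - (delta (f a, y) + delta (?S, y)) \<in> tens_null q n m"
    using insert by (intro tens_null_add_left Lrep_sum) auto
  moreover have "delta (?S, y) - (\<Sum>j\<in>F. delta (f j, y)) \<in> tens_null q n m"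
    using insert by auto
  ultimately show ?case
    using insert(1,2) tens_null_add by (fastforce simp: algebra_simps)
qed (simp add: tens_null_delta_zero_left)

lemma tens_null_sum_right:
  assumes "finite S" "x \<in> Lrep q n" "\<And>p. p \<in> S \<Longrightarrow> g p \<in> Lrep q m"
  shows "(\<Sum>p\<in>S. vscale (c p) (delta (x, g p))) - delta (x, \<Sum>p\<in>S. vscale (c p) (g p))
    \<in> tens_null q n m"
  using assms
proof (induction S rule: finite_induct)
  case empty thus ?case
    using tens_null_diff[OF tens_null_zero tens_null_delta_zero_right] by simp
next
  case (insert a F)
  let ?y = "vscale (c a) (g a)" and ?Y = "\<Sum>p\<in>F. vscale (c p) (g p)"
  have "(\<Sum>p\<in>insert a F. vscale (c p) (delta (x, g p))) - delta (x, \<Sum>p\<in>insert a F. vscale (c p) (g p))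
    = ((\<Sum>p\<in>F. vscale (c p) (delta (x, g p))) - delta (x, ?Y))
      - (delta (x, ?y) - vscale (c a) (delta (x, g a)))
      - (delta (x, ?y + ?Y) - (delta (x, ?y) + delta (x, ?Y)))"
    using insert(1,2) by (simp add: algebra_simps)
  also have "\<dots> \<in> tens_null q n m"
  proof (rule tens_null_diff[OF tens_null_diff])
    show "(\<Sum>p\<in>F. vscale (c p) (delta (x, g p))) - delta (x, ?Y) \<in> tens_null q n m"
      using insert by auto
    show "delta (x, ?y) - vscale (c a) (delta (x, g a)) \<in> tens_null q n m"
      using insert by (intro tens_null_scale_right) auto
    show "delta (x, ?y + ?Y) - (delta (x, ?y) + delta (x, ?Y)) \<in> tens_null q n m"
      using insert by (intro tens_null_add_right Lrep_sum Lrep_scale) auto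
  qed
  finally show ?case .
qed

section \<open>The inverse of multiplication\<close>

definition tens_split :: "nat set \<Rightarrow> (nat \<Rightarrow> fw) \<Rightarrow> (nat \<Rightarrow> fw) \<Rightarrow> fw \<Rightarrow> fw \<times> fw \<Rightarrow> complex" where
  "tens_split J U V z = (\<Sum>i\<in>J. delta (U i, fmul (V i) z))"

context
  fixes q :: real and n :: int and J :: "nat set" and U V :: "nat \<Rightarrow> fw"
  assumes decomposition: "unit_decomposition q n J U V"
begin

lemma decomposition_finite: "finite J"
  and decomposition_Lrep: "i \<in> J \<Longrightarrow> U i \<in> Lrep q n" "i \<in> J \<Longrightarrow> V i \<in> Lrep q (- n)"
  and decomposition_sum: "(\<Sum>i\<in>J. fmul (U i) (V i)) - fone \<in> suq_ideal q"
  using decomposition by (simp_all add: unit_decomposition_def)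

lemma decomposition_fmul_Lrep: "i \<in> J \<Longrightarrow> z \<in> Lrep q (n + m) \<Longrightarrow> fmul (V i) z \<in> Lrep q m"
  by (rule Lrep_fmul_neg_left[OF decomposition_Lrep(2)])

lemma tens_split_mem_tens_free: "z \<in> Lrep q (n + m) \<Longrightarrow> tens_split J U V z \<in> tens_free q n m"
  using fsupp_sum[of "\<lambda>i. delta (U i, fmul (V i) z)" J]
  by (auto simp: tens_free_def tens_split_def fin_sum decomposition_Lrep decomposition_fmul_Lrep)

lemma tens_mult_tens_split: "fin z \<Longrightarrow> equiv_suq q (tens_mult (tens_split J U V z)) z"
proof -
  assume "fin z"
  have "tens_mult (tens_split J U V z) - z = fmul ((\<Sum>i\<in>J. fmul (U i) (V i)) - fone) z"
    by (simp add: tens_split_def tens_mult_sum fmul_sum_left fmul_assoc fmul_diff_left)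
  also have "\<dots> \<in> suq_ideal q"
    using decomposition_sum \<open>fin z\<close> by (rule suq_ideal_fmul_right)
  finally show ?thesis by (simp add: equiv_suq_def vsub_eq)
qed

lemma tens_split_suq_ideal:
  assumes "z \<in> Lrep q (n + m)" "z \<in> suq_ideal q"
  shows "tens_split J U V z \<in> tens_null q n m"
  unfolding tens_split_def
proof (rule tens_null_sum)
  fix i assume i: "i \<in> J"
  have "fmul (V i) z \<in> suq_ideal q"
    using assms i decomposition_Lrep(2) by (blast intro: suq_ideal_fmul_left Lrep_fin)
  hence "delta (U i, fmul (V i) z) - delta (U i, 0) \<in> tens_null q n m"
    using assms i by (intro tens_null_equiv_right) (auto simp: decomposition_Lrep decomposition_fmul_Lrep)
  thus "delta (U i, fmul (V i) z) \<in> tens_null q n m"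
    using tens_null_add[OF _ tens_null_delta_zero_right[OF decomposition_Lrep(1)[OF i]]] by fastforce
qed

text \<open>Balancedness moves \<open>V\<^sub>i x \<in> \<L>\<^sub>0\<close> across the tensor sign.\<close>

lemma delta_equiv_tens_split:
  assumes x: "x \<in> Lrep q n" and y: "y \<in> Lrep q m"
  shows "delta (x, y) - tens_split J U V (fmul x y) \<in> tens_null q n m"
proof -
  have Vx: "fmul (V i) x \<in> Lrep q 0" if "i \<in> J" for i
    using Lrep_fmul_neg_left[OF decomposition_Lrep(2)[OF that], of x 0] x by simp
  have UVx: "fmul (fmul (U i) (V i)) x \<in> Lrep q n" if "i \<in> J" for i
    using Lrep_fmul[OF decomposition_Lrep(1)[OF that] Vx[OF that]] by (simp add: fmul_assoc)
  have "x - (\<Sum>i\<in>J. fmul (fmul (U i) (V i)) x) = fmul (- ((\<Sum>i\<in>J. fmul (U i) (V i)) - fone)) x"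
    by (simp add: fmul_sum_left fmul_diff_left)
  also have "\<dots> \<in> suq_ideal q"
    using decomposition_sum x by (intro suq_ideal_fmul_right suq_ideal_neg Lrep_fin)
  finally have "delta (x, y) - delta (\<Sum>i\<in>J. fmul (fmul (U i) (V i)) x, y) \<in> tens_null q n m"
    using x y UVx by (intro tens_null_equiv_left Lrep_sum)
  moreover have "delta (\<Sum>i\<in>J. fmul (fmul (U i) (V i)) x, y)
      - (\<Sum>i\<in>J. delta (fmul (fmul (U i) (V i)) x, y)) \<in> tens_null q n m"
    using decomposition_finite UVx y by (rule tens_null_sum_left)
  moreover have "(\<Sum>i\<in>J. delta (fmul (fmul (U i) (V i)) x, y)) - tens_split J U V (fmul x y)
      \<in> tens_null q n m"
    unfolding tens_split_def sum_subtractf[symmetric]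
    using tens_null_balanced[OF decomposition_Lrep(1) Vx y]
    by (intro tens_null_sum) (simp add: fmul_assoc)
  ultimately show ?thesis by (blast intro: tens_null_trans)
qed

lemma tens_split_linear:
  assumes "finite S" "\<And>p. p \<in> S \<Longrightarrow> z p \<in> Lrep q (n + m)"
  shows "(\<Sum>p\<in>S. vscale (c p) (tens_split J U V (z p))) - tens_split J U V (\<Sum>p\<in>S. vscale (c p) (z p))
    \<in> tens_null q n m"
proof -
  have "(\<Sum>p\<in>S. vscale (c p) (tens_split J U V (z p))) - tens_split J U V (\<Sum>p\<in>S. vscale (c p) (z p))
    = (\<Sum>i\<in>J. (\<Sum>p\<in>S. vscale (c p) (delta (U i, fmul (V i) (z p))))
        - delta (U i, \<Sum>p\<in>S. vscale (c p) (fmul (V i) (z p))))"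
    by (simp add: tens_split_def vscale_sum sum.swap[of _ S] sum_subtractf fmul_sum_right
        fmul_scale_right)
  also have "\<dots> \<in> tens_null q n m"
    using assms
    by (intro tens_null_sum tens_null_sum_right) (auto simp: decomposition_Lrep decomposition_fmul_Lrep)
  finally show ?thesis .
qed

lemma tens_free_equiv_tens_split:
  assumes t: "t \<in> tens_free q n m"
  shows "t - tens_split J U V (tens_mult t) \<in> tens_null q n m"
proof -
  have fin: "finite (fsupp t)" and supp: "\<And>p. p \<in> fsupp t \<Longrightarrow> fst p \<in> Lrep q n \<and> snd p \<in> Lrep q m"
    using t by (auto simp: tens_free_def fin_def)
  have "t - (\<Sum>p\<in>fsupp t. vscale (t p) (tens_split J U V (fmul (fst p) (snd p))))
      = (\<Sum>p\<in>fsupp t. vscale (t p) (delta p - tens_split J U V (fmul (fst p) (snd p))))"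
    using fin_eq_sum_delta[of t] t by (simp add: tens_free_def vscale_diff sum_subtractf)
  also have "\<dots> \<in> tens_null q n m"
    using supp delta_equiv_tens_split by (intro tens_null_sum tens_null_scale) (metis prod.collapse)
  finally have "t - (\<Sum>p\<in>fsupp t. vscale (t p) (tens_split J U V (fmul (fst p) (snd p))))
      \<in> tens_null q n m" .
  moreover have "(\<Sum>p\<in>fsupp t. vscale (t p) (tens_split J U V (fmul (fst p) (snd p))))
      - tens_split J U V (tens_mult t) \<in> tens_null q n m"
    using tens_split_linear[OF fin] supp Lrep_fmul tens_mult_eq_sum[OF fin] by simp
  ultimately show ?thesis by (rule tens_null_trans)
qed

end

theorem proposition3p1:
  fixes q :: real and n m :: int
  assumes "0 < q" and "q < 1"
  shows "(\<forall>t\<in>tens_free q n m. tens_mult t \<in> Lrep q (n + m))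
       \<and> (\<forall>t\<in>tens_free q n m. tens_mult t \<in> suq_ideal q \<longleftrightarrow> t \<in> tens_null q n m)
       \<and> (\<forall>z\<in>Lrep q (n + m). \<exists>t\<in>tens_free q n m. equiv_suq q (tens_mult t) z)"
proof -
  obtain J U V where decomposition: "unit_decomposition q n J U V"
    using unit_decomposition_exists[OF \<open>0 < q\<close>] by blast
  have "t \<in> tens_null q n m" if "t \<in> tens_free q n m" "tens_mult t \<in> suq_ideal q" for t
    using tens_null_add[OF tens_free_equiv_tens_split[OF decomposition that(1)]
        tens_split_suq_ideal[OF decomposition tens_mult_mem_Lrep[OF that(1)] that(2)]]
    by simp
  thus ?thesis
    using tens_mult_mem_Lrep tens_mult_tens_null Lrep_fin
      tens_split_mem_tens_free[OF decomposition] tens_mult_tens_split[OF decomposition]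
    by blast
qed

end
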